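(* Let $d\in\mathbb{N}$ and $(d_1,d_2)\in\mathbb{N}^2$. Then $$E_d=\{m+n\gamma^{-1}\ge0:\ m,n\in\mathbb{Z},\ |m|+|n|\le d\},\qquad E_{(d_1,d_2)}=\{m+n\gamma^{-1}\ge0:\ m,n\in\mathbb{Z},\ |m|\le d_1,\ |n|\le d_2\},$$ and $|E_d|=d^2+d+1$, $|E_{(d_1,d_2)}|=2d_1d_2+d_1+d_2+1$.
   Context: Let $f\colon\mathbb{Z}\to\mathbb{Z}$ be defined by $f(0)=f(1)=1$, $f(i+2)=f(i+1)+f(i)$ for all $i\in\mathbb{Z}$; $\gamma=(1+\sqrt5)/2$; $\mathbb{Z}[\gamma]=\mathbb{Z}\oplus\mathbb{Z}\gamma^{-1}$. For $d\in\mathbb{N}$, $E_d$ is the set of $\alpha\in\mathbb{Z}[\gamma]$ such that $\alpha=\sum_{k=1}^s\gamma^{-i_k}$ and $\sum_{k=1}^sf(i_k)\le d$ for some $s\in\mathbb{N}$ and integers $0\le i_1\le\dots\le i_s$ (empty sum $=0$). For $(d_1,d_2)\in\mathbb{N}^2$, $E_{(d_1,d_2)}$ is the set of $\alpha\in\mathbb{Z}[\gamma]$ such that $\alpha=\sum_{k=1}^s\gamma^{-i_k}$, $\sum_kf(i_k-2)\le d_1$ and $\sum_kf(i_k-1)\le d_2$ for some such $s$ and $i_1,\dots,i_s$. *)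

theory Defs
  imports Complex_Main
begin

function fibZ :: "int \<Rightarrow> int" where
  "fibZ i = (if i = 0 \<or> i = 1 then 1
             else if i > 1 then fibZ (i - 1) + fibZ (i - 2)
             else fibZ (i + 2) - fibZ (i + 1))"
  by auto
termination
  by (relation "measure (\<lambda>i. nat (if i \<ge> 1 then i else 1 - i))") auto

definition gam :: real where
  "gam = (1 + sqrt 5) / 2"

definition E1 :: "nat \<Rightarrow> real set" where
  "E1 d = {\<alpha>. \<exists>is :: nat list. sorted is \<and>
              \<alpha> = (\<Sum>i\<leftarrow>is. (1 / gam) ^ i) \<and>
              (\<Sum>i\<leftarrow>is. fibZ (int i)) \<le> int d}"

definition E2 :: "nat \<Rightarrow> nat \<Rightarrow> real set" where
  "E2 d1 d2 = {\<alpha>. \<exists>is :: nat list. sorted is \<and>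
              \<alpha> = (\<Sum>i\<leftarrow>is. (1 / gam) ^ i) \<and>
              (\<Sum>i\<leftarrow>is. fibZ (int i - 2)) \<le> int d1 \<and>
              (\<Sum>i\<leftarrow>is. fibZ (int i - 1)) \<le> int d2}"

end

theory Submission
  imports Defs "HOL-Library.Multiset"
begin

(* Write phi = 1/gam, so phi^2 = 1 - phi and 0 < phi < 1.  By induction,
   phi^i = (-1)^i f(i-2) + (-1)^(i+1) f(i-1) phi, so a sum of powers phi^(i_k) equals m + n phi
   with |m| <= sum f(i_k - 2) and |n| <= sum f(i_k - 1) ("cost bound").  Conversely every
   nonnegative m + n phi is such a sum with costs at most |m| and |n|: directly (exponents 0, 1, 2)
   if m >= 0 and m + n >= 0, and otherwise by descent, since (m + n) + m phi = (m + n phi)/phi is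
   again nonnegative with a smaller |m| + |n| and dividing by phi shifts all exponents by one.
   Since f(i) = f(i-2) + f(i-1), both E_d and E_(d1,d2) are obtained from one characterisation
   for an arbitrary downward closed cost condition.
   For the cardinalities, 1 and phi are linearly independent over the integers (by a descent of
   Euclidean type), so m + n phi determines (m, n); for a finite lattice set B symmetric under
   negation and containing 0, exactly (|B| + 1)/2 of its points give nonnegative values.  The
   diamond |m| + |n| <= d has 2d^2 + 2d + 1 points and the box has (2d1 + 1)(2d2 + 1). *)

declare fibZ.simps[simp del]

lemma fibZ_rec: "fibZ i = fibZ (i - 1) + fibZ (i - 2)"
proof (cases "i \<ge> 2")
  case True
  then show ?thesis by (subst fibZ.simps) simp
next
  case False
  then have "fibZ (i - 2) = fibZ i - fibZ (i - 1)" by (subst fibZ.simps) simp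
  then show ?thesis by simp
qed

lemma fibZ_0: "fibZ 0 = 1" and fibZ_1: "fibZ 1 = 1"
  by (subst fibZ.simps; simp)+

lemma fibZ_minus_1: "fibZ (-1) = 0" and fibZ_minus_2: "fibZ (-2) = 1"
  by (subst fibZ.simps; simp add: fibZ_0 fibZ_1)+

lemma fibZ_nonneg:
  assumes "i \<ge> -2" shows "fibZ i \<ge> 0"
proof -
  have "fibZ (int k - 2) \<ge> 0 \<and> fibZ (int k - 1) \<ge> 0" for k
  proof (induction k)
    case 0 then show ?case by (simp add: fibZ_minus_1 fibZ_minus_2)
  next
    case (Suc k)
    then show ?case using fibZ_rec[of "int k"] by simp
  qed
  moreover have "i = int (nat (i + 2)) - 2" using assms by simp
  ultimately show ?thesis by metis
qed

definition phi :: real where "phi = 1 / gam"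

lemma gam_gt_1: "gam > 1"
  unfolding gam_def by (simp add: real_less_rsqrt)

lemma gam_sq: "gam\<^sup>2 = gam + 1"
proof -
  have "sqrt 5 * sqrt 5 = (5::real)" by simp
  then show ?thesis unfolding gam_def power2_eq_square by (simp add: algebra_simps)
qed

lemma phi_pos: "phi > 0" and phi_lt_1: "phi < 1"
  using gam_gt_1 unfolding phi_def by auto

lemma phi_sq: "phi\<^sup>2 = 1 - phi"
  using gam_sq gam_gt_1 unfolding phi_def power2_eq_square by (simp add: field_simps)

lemma phi_times: "phi * (of_int A + of_int B * phi) = of_int B + of_int (A - B) * phi"
proof -
  have "phi * (of_int A + of_int B * phi) = of_int A * phi + of_int B * phi\<^sup>2"
    by (simp add: algebra_simps power2_eq_square)
  then show ?thesis unfolding phi_sq by (simp add: algebra_simps)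
qed

text \<open>If \<open>a + b phi = 0\<close> with
  \<open>b \<noteq> 0\<close> then \<open>0 < |a| < |b|\<close>, and dividing by \<open>phi\<close> gives the relation
  \<open>(a + b) + a phi = 0\<close> with smaller second coefficient.\<close>
lemma phi_lin_indep:
  assumes "of_int a + of_int b * phi = 0" shows "a = 0 \<and> b = 0"
  using assms
proof (induction "nat \<bar>b\<bar>" arbitrary: a b rule: less_induct)
  case less
  show ?case
  proof (cases "b = 0")
    case True with less.prems show ?thesis by simp
  next
    case False
    have a: "of_int a = - of_int b * phi" using less.prems by simp
    have "\<bar>a\<bar> < \<bar>b\<bar>"
    proof -
      have "\<bar>real_of_int a\<bar> = \<bar>of_int b\<bar> * phi" using a phi_pos by (simp add: abs_mult)
      also have "\<dots> < \<bar>of_int b\<bar>" using False phi_lt_1 by simp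
      finally show ?thesis by linarith
    qed
    moreover have "of_int (a + b) + of_int a * phi = 0"
      using phi_times[of "a + b" a] less.prems phi_pos by simp
    ultimately have "a = 0" using less.hyps[of a "a + b"] by simp
    then show ?thesis using a False phi_pos by simp
  qed
qed

lemma phi_power:
  "phi ^ i = of_int ((-1) ^ i * fibZ (int i - 2)) + of_int ((-1) ^ (i + 1) * fibZ (int i - 1)) * phi"
proof (induction i)
  case 0 then show ?case by (simp add: fibZ_minus_1 fibZ_minus_2)
next
  case (Suc i)
  have "phi ^ Suc i = phi * phi ^ i" by simp
  also have "\<dots> = of_int ((-1) ^ (i + 1) * fibZ (int i - 1))
      + of_int ((-1) ^ i * (fibZ (int i - 2) + fibZ (int i - 1))) * phi"
    unfolding Suc.IH phi_times by (simp add: algebra_simps)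
  also have "\<dots> = of_int ((-1) ^ Suc i * fibZ (int (Suc i) - 2))
      + of_int ((-1) ^ (Suc i + 1) * fibZ (int (Suc i) - 1)) * phi"
  proof -
    have "fibZ (int (Suc i) - 1) = fibZ (int i - 2) + fibZ (int i - 1)"
      using fibZ_rec[of "int i"] by simp
    moreover have "int (Suc i) - 2 = int i - 1" by simp
    moreover have "(-1::int) ^ (Suc i + 1) = (-1) ^ i" "(-1::int) ^ Suc i = (-1) ^ (i + 1)" by simp_all
    ultimately show ?thesis by (simp only:)
  qed
  finally show ?case .
qed

text \<open>A finite multiset of exponents, given as a list, has the value \<open>\<Sum> phi^i\<close> and two costs:
  \<open>\<Sum> f(i - 2)\<close> bounds the integer coordinate and \<open>\<Sum> f(i - 1)\<close> the \<open>phi\<close>-coordinate.\<close>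
definition val :: "nat list \<Rightarrow> real" where
  "val is = (\<Sum>i\<leftarrow>is. phi ^ i)"

definition cost_unit :: "nat list \<Rightarrow> int" where
  "cost_unit is = (\<Sum>i\<leftarrow>is. fibZ (int i - 2))"

definition cost_phi :: "nat list \<Rightarrow> int" where
  "cost_phi is = (\<Sum>i\<leftarrow>is. fibZ (int i - 1))"

lemma val_nonneg: "val is \<ge> 0"
  unfolding val_def using phi_pos by (intro sum_list_nonneg) auto

lemma fibZ_cost_split: "(\<Sum>i\<leftarrow>is. fibZ (int i)) = cost_unit is + cost_phi is"
proof -
  have "(\<lambda>i. fibZ (int i)) = (\<lambda>i. fibZ (int i - 2) + fibZ (int i - 1))"
  proof
    fix i :: nat
    show "fibZ (int i) = fibZ (int i - 2) + fibZ (int i - 1)"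
      using fibZ_rec[of "int i"] by simp
  qed
  then show ?thesis unfolding cost_unit_def cost_phi_def by (simp add: sum_list_addf)
qed

lemma val_shift: "val (map Suc is) = phi * val is"
  unfolding val_def by (simp add: sum_list_const_mult o_def)

lemma cost_unit_shift: "cost_unit (map Suc is) = cost_phi is"
  unfolding cost_unit_def cost_phi_def by (simp add: o_def)

lemma cost_phi_shift: "cost_phi (map Suc is) = cost_unit is + cost_phi is"
  unfolding fibZ_cost_split[symmetric] unfolding cost_phi_def by (simp add: o_def)

lemma sum_list_map_sort:
  fixes f :: "'a::linorder \<Rightarrow> 'b::comm_monoid_add"
  shows "(\<Sum>x\<leftarrow>sort xs. f x) = (\<Sum>x\<leftarrow>xs. f x)"
proof -
  have "sum_mset (mset (map f (sort xs))) = sum_mset (mset (map f xs))"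
    by (simp only: mset_map mset_sort)
  then show ?thesis by (simp only: sum_mset_sum_list)
qed

lemma val_coeff_bound:
  "\<exists>M N. val is = of_int M + of_int N * phi \<and> \<bar>M\<bar> \<le> cost_unit is \<and> \<bar>N\<bar> \<le> cost_phi is"
proof (induction "is")
  case Nil
  show ?case unfolding val_def cost_unit_def cost_phi_def by (intro exI[of _ 0]) simp
next
  case (Cons a "is")
  then obtain M N where MN: "val is = of_int M + of_int N * phi"
    "\<bar>M\<bar> \<le> cost_unit is" "\<bar>N\<bar> \<le> cost_phi is" by blast
  define A where "A = (-1::int) ^ a * fibZ (int a - 2)"
  define B where "B = (-1::int) ^ (a + 1) * fibZ (int a - 1)"
  have "\<bar>A\<bar> = fibZ (int a - 2)" "\<bar>B\<bar> = fibZ (int a - 1)"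
    unfolding A_def B_def using fibZ_nonneg[of "int a - 2"] fibZ_nonneg[of "int a - 1"]
    by (simp_all add: abs_mult)
  moreover have "val (a # is) = of_int (A + M) + of_int (B + N) * phi"
    using MN(1) phi_power[of a] unfolding val_def A_def B_def by (simp add: algebra_simps)
  moreover have "cost_unit (a # is) = fibZ (int a - 2) + cost_unit is"
    "cost_phi (a # is) = fibZ (int a - 1) + cost_phi is"
    unfolding cost_unit_def cost_phi_def by simp_all
  ultimately show ?case using MN(2,3) abs_triangle_ineq[of A M] abs_triangle_ineq[of B N]
    by (intro exI[of _ "A + M"] exI[of _ "B + N"]) simp
qed

text \<open>Direct representation when \<open>m \<ge> 0\<close> and \<open>m + n \<ge> 0\<close>: exponents \<open>0\<close> and \<open>1\<close> if
  \<open>n \<ge> 0\<close>, exponents \<open>0\<close> and \<open>2\<close> if \<open>n < 0\<close> (as \<open>phi\<^sup>2 = 1 - phi\<close>); the costs are then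
  exactly \<open>|m|\<close> and \<open>|n|\<close>.\<close>
lemma repr_direct:
  assumes "0 \<le> m" "0 \<le> m + n"
  shows "\<exists>is. val is = of_int m + of_int n * phi \<and> cost_unit is \<le> \<bar>m\<bar> \<and> cost_phi is \<le> \<bar>n\<bar>"
proof (cases "n \<ge> 0")
  case True
  let ?is = "replicate (nat m) 0 @ replicate (nat n) (1::nat)"
  show ?thesis using assms True
    by (intro exI[of _ ?is])
      (simp add: val_def cost_unit_def cost_phi_def sum_list_replicate fibZ_0 fibZ_minus_1 fibZ_minus_2)
next
  case False
  let ?is = "replicate (nat (m + n)) 0 @ replicate (nat (- n)) (2::nat)"
  have "val ?is = of_int (m + n) + of_int (- n) * phi\<^sup>2"
    using assms False by (simp add: val_def sum_list_replicate)
  also have "\<dots> = of_int m + of_int n * phi" unfolding phi_sq by (simp add: algebra_simps)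
  finally show ?thesis using assms False
    by (intro exI[of _ ?is])
      (simp add: cost_unit_def cost_phi_def sum_list_replicate fibZ_0 fibZ_1 fibZ_minus_1 fibZ_minus_2)
qed

text \<open>Outside
  the direct case, \<open>m\<close> and \<open>m + n\<close> have strictly opposite signs, so the quotient
  \<open>(m + n) + m phi\<close> has the smaller size \<open>|m + n| + |m| = |n|\<close>.\<close>
lemma nonneg_repr:
  assumes "0 \<le> of_int m + of_int n * phi"
  shows "\<exists>is. val is = of_int m + of_int n * phi \<and> cost_unit is \<le> \<bar>m\<bar> \<and> cost_phi is \<le> \<bar>n\<bar>"
  using assms
proof (induction "nat (\<bar>m\<bar> + \<bar>n\<bar>)" arbitrary: m n rule: less_induct)
  case less
  show ?case
  proof (cases "0 \<le> m \<and> 0 \<le> m + n")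
    case True
    then show ?thesis by (intro repr_direct) auto
  next
    case False
    define y where "y = of_int (m + n) + of_int m * phi"
    have x_eq: "phi * y = of_int m + of_int n * phi"
      unfolding y_def phi_times by simp
    then have "0 \<le> phi * y" using less.prems by simp
    then have "0 \<le> y" using phi_pos by (simp add: zero_le_mult_iff)
    have signs: "m < 0 \<and> 0 < m + n \<or> 0 < m \<and> m + n < 0"
    proof (cases "m < 0")
      case True
      then have "of_int m * phi < 0" using phi_pos by (simp add: mult_neg_pos)
      then have "0 < real_of_int (m + n)" using \<open>0 \<le> y\<close> unfolding y_def by linarith
      then show ?thesis using True by simp
    next
      case False
      then have "m + n < 0" using \<open>\<not> (0 \<le> m \<and> 0 \<le> m + n)\<close> by simp
      then have "0 < of_int m * phi" using \<open>0 \<le> y\<close> unfolding y_def by linarith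
      then show ?thesis using \<open>m + n < 0\<close> phi_pos by (simp add: zero_less_mult_iff)
    qed
    then have "nat (\<bar>m + n\<bar> + \<bar>m\<bar>) < nat (\<bar>m\<bar> + \<bar>n\<bar>)" by auto
    then obtain is' where is': "val is' = y" "cost_unit is' \<le> \<bar>m + n\<bar>" "cost_phi is' \<le> \<bar>m\<bar>"
      using less.hyps \<open>0 \<le> y\<close> unfolding y_def by blast
    have "cost_unit is' + cost_phi is' \<le> \<bar>n\<bar>" using is'(2,3) signs by auto
    then show ?thesis using is' x_eq
      by (intro exI[of _ "map Suc is'"]) (simp add: val_shift cost_unit_shift cost_phi_shift)
  qed
qed

lemma nonneg_sums_char:
  assumes down_closed: "\<And>a b a' b'. C a b \<Longrightarrow> a' \<le> a \<Longrightarrow> b' \<le> b \<Longrightarrow> C a' b'"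
  shows "{x. \<exists>is. sorted is \<and> x = val is \<and> C (cost_unit is) (cost_phi is)}
       = {x. \<exists>m n. x = of_int m + of_int n * phi \<and> 0 \<le> x \<and> C \<bar>m\<bar> \<bar>n\<bar>}"
proof (intro equalityI subsetI)
  fix x assume "x \<in> {x. \<exists>is. sorted is \<and> x = val is \<and> C (cost_unit is) (cost_phi is)}"
  then obtain "is" where x: "x = val is" and C: "C (cost_unit is) (cost_phi is)" by blast
  obtain M N where MN: "val is = of_int M + of_int N * phi"
    "\<bar>M\<bar> \<le> cost_unit is" "\<bar>N\<bar> \<le> cost_phi is"
    using val_coeff_bound by blast
  have "C \<bar>M\<bar> \<bar>N\<bar>" using down_closed[OF C MN(2,3)] .
  then show "x \<in> {x. \<exists>m n. x = of_int m + of_int n * phi \<and> 0 \<le> x \<and> C \<bar>m\<bar> \<bar>n\<bar>}"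
    using x MN(1) val_nonneg[of "is"] by blast
next
  fix x assume "x \<in> {x. \<exists>m n. x = of_int m + of_int n * phi \<and> 0 \<le> x \<and> C \<bar>m\<bar> \<bar>n\<bar>}"
  then obtain m n where x: "x = of_int m + of_int n * phi" "0 \<le> x" and C: "C \<bar>m\<bar> \<bar>n\<bar>" by blast
  then obtain "is" where "is": "val is = x" "cost_unit is \<le> \<bar>m\<bar>" "cost_phi is \<le> \<bar>n\<bar>"
    using nonneg_repr by blast
  have sort_inv: "val (sort is) = val is" "cost_unit (sort is) = cost_unit is"
    "cost_phi (sort is) = cost_phi is"
    unfolding val_def cost_unit_def cost_phi_def by (simp_all only: sum_list_map_sort)
  show "x \<in> {x. \<exists>is. sorted is \<and> x = val is \<and> C (cost_unit is) (cost_phi is)}"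
    using down_closed[OF C "is"(2,3)] "is"(1) sort_inv
    by (intro CollectI exI[of _ "sort is"]) simp
qed

lemma of_int_div_gam: "of_int n / gam = of_int n * phi"
  unfolding phi_def by simp

lemma E1_char: "E1 d = {x. \<exists>m n :: int. x = of_int m + of_int n / gam \<and> x \<ge> 0 \<and> \<bar>m\<bar> + \<bar>n\<bar> \<le> int d}"
proof -
  have "E1 d = {x. \<exists>is. sorted is \<and> x = val is \<and> cost_unit is + cost_phi is \<le> int d}"
    unfolding E1_def phi_def[symmetric] val_def[symmetric] fibZ_cost_split ..
  also have "\<dots> = {x. \<exists>m n. x = of_int m + of_int n * phi \<and> 0 \<le> x \<and> \<bar>m\<bar> + \<bar>n\<bar> \<le> int d}"
    by (rule nonneg_sums_char) simp
  finally show ?thesis unfolding of_int_div_gam by simp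
qed

lemma E2_char: "E2 d1 d2 = {x. \<exists>m n :: int. x = of_int m + of_int n / gam \<and> x \<ge> 0 \<and> \<bar>m\<bar> \<le> int d1 \<and> \<bar>n\<bar> \<le> int d2}"
proof -
  have "E2 d1 d2 = {x. \<exists>is. sorted is \<and> x = val is \<and> cost_unit is \<le> int d1 \<and> cost_phi is \<le> int d2}"
    unfolding E2_def phi_def[symmetric] val_def[symmetric] cost_unit_def[symmetric] cost_phi_def[symmetric] ..
  also have "\<dots> = {x. \<exists>m n. x = of_int m + of_int n * phi \<and> 0 \<le> x \<and> \<bar>m\<bar> \<le> int d1 \<and> \<bar>n\<bar> \<le> int d2}"
    by (rule nonneg_sums_char) simp
  finally show ?thesis unfolding of_int_div_gam by simp
qed

definition embed :: "int \<times> int \<Rightarrow> real" where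
  "embed p = of_int (fst p) + of_int (snd p) * phi"

lemma inj_embed: "inj embed"
proof (rule injI)
  fix p q assume "embed p = embed q"
  then have "of_int (fst p - fst q) + of_int (snd p - snd q) * phi = 0"
    unfolding embed_def by (simp add: algebra_simps)
  then have "fst p - fst q = 0 \<and> snd p - snd q = 0" by (rule phi_lin_indep)
  then show "p = q" by (simp add: prod_eq_iff)
qed

text \<open>For a finite set of lattice points that is symmetric under negation and contains the origin,
  negation pairs the points of negative value with the nonzero points of positive value.\<close>
lemma card_nonneg_part:
  assumes fin: "finite B" and zero: "(0, 0) \<in> B" and sym: "\<And>m n. (m, n) \<in> B \<Longrightarrow> (- m, - n) \<in> B"
  shows "2 * card {x. \<exists>m n. x = of_int m + of_int n * phi \<and> 0 \<le> x \<and> (m, n) \<in> B} = card B + 1"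
proof -
  define P where "P = {p \<in> B. 0 \<le> embed p}"
  define neg where "neg = (\<lambda>p :: int \<times> int. (- fst p, - snd p))"
  have embed_neg: "embed (neg p) = - embed p" for p unfolding embed_def neg_def by simp
  have neg_neg: "neg (neg p) = p" for p unfolding neg_def by simp
  have neg_B: "neg p \<in> B" if "p \<in> B" for p using sym[of "fst p" "snd p"] that unfolding neg_def by simp
  have "{x. \<exists>m n. x = of_int m + of_int n * phi \<and> 0 \<le> x \<and> (m, n) \<in> B} = embed ` P"
    unfolding P_def embed_def by force
  then have card_P: "card {x. \<exists>m n. x = of_int m + of_int n * phi \<and> 0 \<le> x \<and> (m, n) \<in> B} = card P"
    using inj_embed by (simp add: card_image inj_on_subset)
  have card_negP: "card (neg ` P) = card P"
    by (rule card_image) (metis inj_onI neg_neg)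
  have union: "P \<union> neg ` P = B"
  proof
    show "P \<union> neg ` P \<subseteq> B" unfolding P_def using neg_B by auto
    show "B \<subseteq> P \<union> neg ` P"
    proof
      fix p assume "p \<in> B"
      show "p \<in> P \<union> neg ` P"
      proof (cases "0 \<le> embed p")
        case True with \<open>p \<in> B\<close> show ?thesis unfolding P_def by simp
      next
        case False
        then have "neg p \<in> P" using \<open>p \<in> B\<close> neg_B embed_neg unfolding P_def by simp
        then show ?thesis using neg_neg by (metis UnI2 image_eqI)
      qed
    qed
  qed
  have inter: "P \<inter> neg ` P = {(0, 0)}"
  proof
    show "P \<inter> neg ` P \<subseteq> {(0, 0)}"
    proof
      fix p assume "p \<in> P \<inter> neg ` P"
      then obtain q where "p \<in> P" "q \<in> P" "p = neg q" by blast
      moreover have "embed p = - embed q" using \<open>p = neg q\<close> embed_neg by simp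
      ultimately have "embed p = 0" unfolding P_def by simp
      then have "embed p = embed (0, 0)" by (simp add: embed_def)
      then show "p \<in> {(0, 0)}" using inj_embed by (simp add: inj_eq)
    qed
    show "{(0, 0)} \<subseteq> P \<inter> neg ` P"
      using zero unfolding P_def embed_def neg_def by (auto intro: image_eqI[of _ _ "(0, 0)"])
  qed
  have "card P + card (neg ` P) = card (P \<union> neg ` P) + card (P \<inter> neg ` P)"
    by (rule card_Un_Int) (use fin in \<open>auto simp: P_def\<close>)
  then show ?thesis using card_P card_negP union inter by simp
qed

lemma diamond_sum:
  "(\<Sum>m\<in>{-int d..int d}. 2 * (int d - \<bar>m\<bar>) + 1) = 2 * int d ^ 2 + 2 * int d + 1"
proof (induction d)
  case 0 then show ?case by simp
next
  case (Suc d)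
  have S: "{-int (Suc d)..int (Suc d)} = insert (-int d - 1) (insert (int d + 1) {-int d..int d})" by auto
  have "(\<Sum>m\<in>{-int d..int d}. 2*(int (Suc d) - \<bar>m\<bar>) + 1) = (\<Sum>m\<in>{-int d..int d}. (2*(int d - \<bar>m\<bar>) + 1) + 2)"
    by simp
  also have "\<dots> = 2 * int d^2 + 2 * int d + 1 + 2 * (2 * int d + 1)"
    by (simp only: sum.distrib[of "\<lambda>m. 2*(int d - \<bar>m\<bar>) + 1" "\<lambda>m. 2"] Suc.IH) simp
  finally have h: "(\<Sum>m\<in>{-int d..int d}. 2*(int (Suc d) - \<bar>m\<bar>) + 1) = 2 * int d^2 + 2 * int d + 1 + 2 * (2 * int d + 1)" .
  show ?case unfolding S using h by (simp add: power2_eq_square algebra_simps)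
qed

lemma diamond_card: "card {p::int\<times>int. \<bar>fst p\<bar> + \<bar>snd p\<bar> \<le> int d} = 2*d^2 + 2*d + 1"
proof -
  have D: "{p::int\<times>int. \<bar>fst p\<bar> + \<bar>snd p\<bar> \<le> int d} = Sigma {-int d..int d} (\<lambda>m. {-(int d - \<bar>m\<bar>)..int d - \<bar>m\<bar>})"
    by auto
  have "int (card (Sigma {-int d..int d} (\<lambda>m. {-(int d - \<bar>m\<bar>)..int d - \<bar>m\<bar>})))
      = (\<Sum>m\<in>{-int d..int d}. int (card {-(int d - \<bar>m\<bar>)..int d - \<bar>m\<bar>}))"
    by (simp add: of_nat_sum)
  also have "\<dots> = (\<Sum>m\<in>{-int d..int d}. 2*(int d - \<bar>m\<bar>) + 1)"
    by (rule sum.cong) auto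
  finally have "int (card {p::int\<times>int. \<bar>fst p\<bar> + \<bar>snd p\<bar> \<le> int d}) = int (2*d^2 + 2*d + 1)"
    unfolding D diamond_sum by simp
  then show ?thesis by linarith
qed

lemma box_card: "card ({-int a..int a} \<times> {-int b..int b}) = (2*a+1)*(2*b+1)"
proof -
  have "nat (2 * int a + 1) = 2*a+1" "nat (2 * int b + 1) = 2*b+1" by arith+
  then show ?thesis by (simp add: card_cartesian_product)
qed

lemma card_E1: "card (E1 d) = d\<^sup>2 + d + 1"
proof -
  define diamond where "diamond = {p :: int \<times> int. \<bar>fst p\<bar> + \<bar>snd p\<bar> \<le> int d}"
  have E1_diamond: "E1 d = {x. \<exists>m n. x = of_int m + of_int n * phi \<and> 0 \<le> x \<and> (m, n) \<in> diamond}"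
    unfolding E1_char of_int_div_gam diamond_def by simp
  have "finite diamond"
    by (rule finite_subset[of _ "{-int d..int d} \<times> {-int d..int d}"]) (auto simp: diamond_def)
  then have "2 * card (E1 d) = card diamond + 1"
    unfolding E1_diamond by (rule card_nonneg_part) (auto simp: diamond_def)
  then show ?thesis unfolding diamond_def diamond_card by (simp add: power2_eq_square)
qed

lemma card_E2: "card (E2 d1 d2) = 2 * d1 * d2 + d1 + d2 + 1"
proof -
  define box where "box = {-int d1..int d1} \<times> {-int d2..int d2}"
  have box_mem: "(m, n) \<in> box \<longleftrightarrow> \<bar>m\<bar> \<le> int d1 \<and> \<bar>n\<bar> \<le> int d2" for m n
    unfolding box_def by auto
  have E2_box: "E2 d1 d2 = {x. \<exists>m n. x = of_int m + of_int n * phi \<and> 0 \<le> x \<and> (m, n) \<in> box}"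
    unfolding E2_char of_int_div_gam box_mem ..
  have "2 * card (E2 d1 d2) = card box + 1"
    unfolding E2_box by (rule card_nonneg_part) (auto simp: box_def)
  then show ?thesis unfolding box_def box_card by (simp add: algebra_simps)
qed

theorem mainTheorem14:
  fixes d d1 d2 :: nat
  shows "E1 d = {x. \<exists>m n :: int. x = of_int m + of_int n / gam \<and> x \<ge> 0 \<and> \<bar>m\<bar> + \<bar>n\<bar> \<le> int d}
       \<and> E2 d1 d2 = {x. \<exists>m n :: int. x = of_int m + of_int n / gam \<and> x \<ge> 0 \<and> \<bar>m\<bar> \<le> int d1 \<and> \<bar>n\<bar> \<le> int d2}
       \<and> card (E1 d) = d^2 + d + 1
       \<and> card (E2 d1 d2) = 2 * d1 * d2 + d1 + d2 + 1"
  by (intro conjI E1_char E2_char card_E1 card_E2)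

end
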